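(* Let $\mathcal{A}=M_n(\mathbb{F})$ be endowed with an involution $*$, let $\mathcal{A}^+=\{a:a^*=a\}$, $\mathcal{A}^-=\{a:a^*=-a\}$, and let $u\in\mathcal{A}$ be invertible. Then: (1) if $*$ is the transpose involution and $u^{-1}\mathcal{A}^+u\subseteq\mathcal{A}^+$, then $u^{-1}\mathcal{A}^-u\subseteq\mathcal{A}^-$; (2) if $n=2k$, $*$ is the symplectic involution, and $u^{-1}\mathcal{A}^-u\subseteq\mathcal{A}^-$, then $u^{-1}\mathcal{A}^+u\subseteq\mathcal{A}^+$.
   Context: The symplectic involution on $M_{2k}(\mathbb{F})$ is $\begin{pmatrix}A&B\\C&D\end{pmatrix}^s=\begin{pmatrix}D^t&-B^t\\-C^t&A^t\end{pmatrix}$ for $A,B,C,D\in M_k(\mathbb{F})$. *)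

theory Defs
  imports "HOL-Analysis.Analysis"
begin

text \<open>Matrices in M_n(F) are rendered as 'a^'n^'n (row index first).
  For M_{2k}(F) the index type is 'k + 'k: Inl i is the i-th index of the first
  block, Inr i the i-th index of the second block, so that
  X = [[A, B], [C, D]] with A i j = X$Inl i$Inl j, B i j = X$Inl i$Inr j,
  C i j = X$Inr i$Inl j, D i j = X$Inr i$Inr j.\<close>

definition symplectic_inv ::
  "'a::ring_1 ^ ('k::finite + 'k) ^ ('k + 'k) \<Rightarrow> 'a ^ ('k + 'k) ^ ('k + 'k)" where
  "symplectic_inv X = (\<chi> r c. case (r, c) of
      (Inl i, Inl j) \<Rightarrow> X $ Inr j $ Inr i
    | (Inl i, Inr j) \<Rightarrow> - (X $ Inl j $ Inr i)
    | (Inr i, Inl j) \<Rightarrow> - (X $ Inr j $ Inl i)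
    | (Inr i, Inr j) \<Rightarrow> X $ Inl j $ Inl i)"

definition sym_elems :: "('m \<Rightarrow> 'm) \<Rightarrow> 'm set" where
  "sym_elems invol = {a. invol a = a}"

definition skew_elems :: "('m::uminus \<Rightarrow> 'm) \<Rightarrow> 'm set" where
  "skew_elems invol = {a. invol a = - a}"

end

theory Submission
  imports Defs
begin

text \<open>For a unital anti-homomorphism \<open>f\<close> of the matrix ring and \<open>X\<close> with
  \<open>f X = \<plusminus>X\<close>, the conjugate \<open>u\<^sup>-\<^sup>1 X u\<close> again satisfies this equation iff \<open>u f(u)\<close>
  commutes with \<open>X\<close>. The symmetric matrices (for the transpose) and the skew matrices (for
  the symplectic involution) contain enough matrix units to force every matrix commuting
  with all of them to be scalar. So under either hypothesis \<open>u f(u)\<close> is scalar, hence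
  commutes with every matrix, and the other eigenspace of \<open>f\<close> is preserved as well.\<close>

lemma matrix_add_rdistrib:
  fixes A :: "'a::semiring_1^'n::finite^'m"
  shows "(A + B) ** C = A ** C + B ** C"
  by (simp add: vec_eq_iff matrix_matrix_mult_def distrib_right sum.distrib)

lemma matrix_mul_uminus_right:
  fixes A :: "'a::ring_1^'n::finite^'m"
  shows "A ** (- B) = - (A ** B)"
  by (simp add: vec_eq_iff matrix_matrix_mult_def sum_negf)

lemma matrix_mul_uminus_left:
  fixes A :: "'a::ring_1^'n::finite^'m"
  shows "(- A) ** B = - (A ** B)"
  by (simp add: vec_eq_iff matrix_matrix_mult_def sum_negf)

lemma mat_commute:
  fixes A :: "'a::comm_semiring_1^'n::finite^'n"
  shows "mat c ** A = A ** mat c"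
  by (simp add: vec_eq_iff matrix_matrix_mult_def mat_def if_distrib if_distribR mult.commute
      cong: if_cong)

lemma matrix_inv_right:
  assumes "invertible (A::'a::semiring_1^'n::finite^'m)"
  shows "A ** matrix_inv A = mat 1"
  using someI_ex[OF assms[unfolded invertible_def]] by (simp add: matrix_inv_def)

lemma matrix_inv_left:
  assumes "invertible (A::'a::semiring_1^'n::finite^'m)"
  shows "matrix_inv A ** A = mat 1"
  using someI_ex[OF assms[unfolded invertible_def]] by (simp add: matrix_inv_def)

lemma invertible_matrix_mul_cancel:
  fixes A :: "'a::semiring_1^'n::finite^'n"
  assumes "invertible A" "invertible B"
  shows "A ** X ** B = A ** Y ** B \<longleftrightarrow> X = Y"
proof
  assume "A ** X ** B = A ** Y ** B"
  then have "matrix_inv A ** (A ** X ** B) ** matrix_inv B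
      = matrix_inv A ** (A ** Y ** B) ** matrix_inv B" by simp
  then show "X = Y"
    by (simp add: matrix_mul_assoc matrix_inv_left[OF assms(1)]
        flip: matrix_mul_assoc[of _ B] add: matrix_inv_right[OF assms(2)])
qed simp

definition matrix_unit :: "'n::finite \<Rightarrow> 'n \<Rightarrow> 'a::semiring_1^'n^'n" where
  "matrix_unit x y = (\<chi> a b. if a = x \<and> b = y then 1 else 0)"

lemma matrix_mul_matrix_unit:
  "(P ** matrix_unit x y) $ a $ b = (if b = y then P $ a $ x else 0)"
  by (simp add: matrix_matrix_mult_def matrix_unit_def if_distrib if_distribR cong: if_cong)

lemma matrix_unit_mul_matrix:
  "(matrix_unit x y ** P) $ a $ b = (if a = x then P $ y $ b else 0)"
  by (simp add: matrix_matrix_mult_def matrix_unit_def if_distrib if_distribR cong: if_cong)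

lemma transpose_matrix_unit: "transpose (matrix_unit x y) = matrix_unit y x"
  by (auto simp: vec_eq_iff transpose_def matrix_unit_def)

lemma transpose_add: "transpose (A + B) = transpose A + transpose B"
  by (simp add: vec_eq_iff transpose_def)

lemma commute_matrix_unit_column:
  assumes "P ** matrix_unit x y = matrix_unit x y ** P" "a \<noteq> x"
  shows "P $ a $ x = 0"
  using arg_cong[OF assms(1), of "\<lambda>M. M $ a $ y"] assms(2)
  by (simp add: matrix_mul_matrix_unit matrix_unit_mul_matrix)

lemma commute_matrix_unit_diagonal:
  assumes "P ** matrix_unit x y = matrix_unit x y ** P"
  shows "P $ x $ x = P $ y $ y"
  using arg_cong[OF assms(1), of "\<lambda>M. M $ x $ y"]
  by (simp add: matrix_mul_matrix_unit matrix_unit_mul_matrix)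

lemma commute_matrix_unit_add_diagonal:
  assumes "P ** (matrix_unit x y + matrix_unit p q) = (matrix_unit x y + matrix_unit p q) ** P"
    and "y \<noteq> q" "x \<noteq> p"
  shows "P $ x $ x = P $ y $ y"
  using arg_cong[OF assms(1), of "\<lambda>M. M $ x $ y"] assms(2,3)
  by (simp add: matrix_add_ldistrib matrix_add_rdistrib matrix_mul_matrix_unit
      matrix_unit_mul_matrix)

lemma eq_mat_if_scalar_entries:
  assumes "\<And>a b. a \<noteq> b \<Longrightarrow> P $ a $ b = 0" "\<And>a b. P $ a $ a = P $ b $ b"
  shows "P = mat (P $ c $ c)"
  using assms by (auto simp: vec_eq_iff mat_def)

lemma sum_UNIV_Plus:
  "sum f (UNIV::('k::finite + 'k) set) = (\<Sum>l\<in>UNIV. f (Inl l)) + (\<Sum>l\<in>UNIV. f (Inr l))"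
  using sum.Plus[of "UNIV::'k set" "UNIV::'k set" f] by (simp add: comp_def)

lemma symplectic_inv_matrix_mul:
  fixes X :: "'a::comm_ring_1^('k::finite + 'k)^('k + 'k)"
  shows "symplectic_inv (X ** Y) = symplectic_inv Y ** symplectic_inv X"
proof -
  have "symplectic_inv (X ** Y) $ r $ c = (symplectic_inv Y ** symplectic_inv X) $ r $ c" for r c
    by (cases r; cases c) (simp_all add: symplectic_inv_def matrix_matrix_mult_def sum_UNIV_Plus
        algebra_simps sum_negf)
  then show ?thesis by (simp add: vec_eq_iff)
qed

lemma symplectic_inv_mat_one:
  "symplectic_inv (mat 1 :: 'a::ring_1^('k::finite + 'k)^('k + 'k)) = mat 1"
proof -
  have "symplectic_inv (mat 1 :: 'a^('k + 'k)^('k + 'k)) $ r $ c = mat 1 $ r $ c" for r c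
    by (cases r; cases c) (simp_all add: symplectic_inv_def mat_def)
  then show ?thesis by (simp add: vec_eq_iff)
qed

lemma symplectic_inv_add:
  "symplectic_inv (X + Y :: 'a::ring_1^('k::finite + 'k)^('k + 'k))
    = symplectic_inv X + symplectic_inv Y"
proof -
  have "symplectic_inv (X + Y) $ r $ c = (symplectic_inv X + symplectic_inv Y) $ r $ c" for r c
    by (cases r; cases c) (simp_all add: symplectic_inv_def)
  then show ?thesis by (simp add: vec_eq_iff)
qed

lemma symplectic_inv_matrix_unit_Inl_Inr:
  "symplectic_inv (matrix_unit (Inl i) (Inr j) :: 'a::ring_1^('k::finite + 'k)^('k + 'k))
    = - matrix_unit (Inl j) (Inr i)"
proof -
  have "symplectic_inv (matrix_unit (Inl i) (Inr j) :: 'a^('k + 'k)^('k + 'k)) $ r $ c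
      = (- matrix_unit (Inl j) (Inr i)) $ r $ c" for r c
    by (cases r; cases c) (auto simp: symplectic_inv_def matrix_unit_def)
  then show ?thesis by (simp add: vec_eq_iff)
qed

lemma symplectic_inv_matrix_unit_Inr_Inl:
  "symplectic_inv (matrix_unit (Inr i) (Inl j) :: 'a::ring_1^('k::finite + 'k)^('k + 'k))
    = - matrix_unit (Inr j) (Inl i)"
proof -
  have "symplectic_inv (matrix_unit (Inr i) (Inl j) :: 'a^('k + 'k)^('k + 'k)) $ r $ c
      = (- matrix_unit (Inr j) (Inl i)) $ r $ c" for r c
    by (cases r; cases c) (auto simp: symplectic_inv_def matrix_unit_def)
  then show ?thesis by (simp add: vec_eq_iff)
qed

locale matrix_antihom =
  fixes f :: "'a::comm_ring_1^'n::finite^'n \<Rightarrow> 'a^'n^'n"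
  assumes f_matrix_mul: "f (X ** Y) = f Y ** f X"
    and f_mat_one: "f (mat 1) = mat 1"
begin

lemma f_matrix_inv_left:
  assumes "invertible u"
  shows "f u ** f (matrix_inv u) = mat 1"
  using f_matrix_mul[of "matrix_inv u" u] by (simp add: matrix_inv_left[OF assms] f_mat_one)

lemma f_matrix_inv_right:
  assumes "invertible u"
  shows "f (matrix_inv u) ** f u = mat 1"
  using f_matrix_mul[of u "matrix_inv u"] by (simp add: matrix_inv_right[OF assms] f_mat_one)

lemma invertible_f:
  assumes "invertible u"
  shows "invertible (f u)"
  using f_matrix_inv_left[OF assms] f_matrix_inv_right[OF assms] by (auto simp: invertible_def)

lemma f_conj_eq_conj_iff_commute:
  assumes "invertible u"
  shows "f (matrix_inv u ** X ** u) = matrix_inv u ** f X ** u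
    \<longleftrightarrow> (u ** f u) ** f X = f X ** (u ** f u)"
proof -
  have "u ** f (matrix_inv u ** X ** u) ** f u = u ** f u ** f X ** (f (matrix_inv u) ** f u)"
    by (simp add: f_matrix_mul matrix_mul_assoc)
  also have "\<dots> = (u ** f u) ** f X"
    by (simp add: f_matrix_inv_right[OF assms] matrix_mul_assoc)
  finally have lhs: "u ** f (matrix_inv u ** X ** u) ** f u = (u ** f u) ** f X" .
  have "u ** (matrix_inv u ** f X ** u) ** f u = (u ** matrix_inv u) ** f X ** u ** f u"
    by (simp add: matrix_mul_assoc)
  also have "\<dots> = f X ** (u ** f u)"
    by (simp add: matrix_inv_right[OF assms] matrix_mul_assoc)
  finally have rhs: "u ** (matrix_inv u ** f X ** u) ** f u = f X ** (u ** f u)" .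
  show ?thesis
    using invertible_matrix_mul_cancel[OF assms invertible_f[OF assms]] lhs rhs by metis
qed

lemma conj_image_sym_elems_subset_iff:
  assumes "invertible u"
  shows "(\<lambda>a. matrix_inv u ** a ** u) ` sym_elems f \<subseteq> sym_elems f
    \<longleftrightarrow> (\<forall>X\<in>sym_elems f. (u ** f u) ** X = X ** (u ** f u))"
proof -
  have "matrix_inv u ** X ** u \<in> sym_elems f \<longleftrightarrow> (u ** f u) ** X = X ** (u ** f u)"
    if "X \<in> sym_elems f" for X
    using f_conj_eq_conj_iff_commute[OF assms, of X] that by (simp add: sym_elems_def)
  then show ?thesis by blast
qed

lemma conj_image_skew_elems_subset_iff:
  assumes "invertible u"
  shows "(\<lambda>a. matrix_inv u ** a ** u) ` skew_elems f \<subseteq> skew_elems f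
    \<longleftrightarrow> (\<forall>X\<in>skew_elems f. (u ** f u) ** X = X ** (u ** f u))"
proof -
  have "matrix_inv u ** X ** u \<in> skew_elems f \<longleftrightarrow> (u ** f u) ** X = X ** (u ** f u)"
    if "X \<in> skew_elems f" for X
    using f_conj_eq_conj_iff_commute[OF assms, of X] that
    by (simp add: skew_elems_def matrix_mul_uminus_left matrix_mul_uminus_right)
  then show ?thesis by blast
qed

end

interpretation transpose: matrix_antihom "transpose :: 'a::comm_ring_1^'n::finite^'n \<Rightarrow> _"
  by unfold_locales (simp_all add: matrix_transpose_mul)

interpretation symplectic_inv:
  matrix_antihom "symplectic_inv :: 'a::comm_ring_1^('k::finite + 'k)^('k + 'k) \<Rightarrow> _"
  by unfold_locales (simp_all add: symplectic_inv_matrix_mul symplectic_inv_mat_one)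

lemma commute_sym_elems_transpose_imp_scalar:
  fixes P :: "'a::comm_ring_1^'n::finite^'n"
  assumes commute: "\<forall>X\<in>sym_elems transpose. P ** X = X ** P"
  shows "\<exists>c. P = mat c"
proof -
  have "P $ a $ b = 0" if "a \<noteq> b" for a b
    using commute that
    by (intro commute_matrix_unit_column[of P b b]) (auto simp: sym_elems_def transpose_matrix_unit)
  moreover have "P $ a $ a = P $ b $ b" for a b
  proof (cases "a = b")
    case False
    have "matrix_unit a b + matrix_unit b a \<in> sym_elems transpose"
      by (simp add: sym_elems_def transpose_add transpose_matrix_unit add.commute)
    with commute False show ?thesis by (intro commute_matrix_unit_add_diagonal) auto
  qed simp
  ultimately show ?thesis using eq_mat_if_scalar_entries by blast
qed

lemma commute_skew_elems_symplectic_inv_imp_scalar: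
  fixes P :: "'a::comm_ring_1^('k::finite + 'k)^('k + 'k)"
  assumes commute: "\<forall>X\<in>skew_elems symplectic_inv. P ** X = X ** P"
  shows "\<exists>c. P = mat c"
proof -
  have skew_Inl_Inr: "matrix_unit (Inl i) (Inr i) \<in> skew_elems symplectic_inv"
    and skew_Inr_Inl: "matrix_unit (Inr i) (Inl i) \<in> skew_elems symplectic_inv" for i
    by (simp_all add: skew_elems_def symplectic_inv_matrix_unit_Inl_Inr
        symplectic_inv_matrix_unit_Inr_Inl)
  have "P $ a $ b = 0" if "a \<noteq> b" for a b
  proof (cases b)
    case (Inl i)
    then show ?thesis
      using commute skew_Inl_Inr that by (intro commute_matrix_unit_column[of P b "Inr i"]) auto
  next
    case (Inr i)
    then show ?thesis
      using commute skew_Inr_Inl that by (intro commute_matrix_unit_column[of P b "Inl i"]) auto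
  qed
  moreover have Inl_Inr: "P $ Inl i $ Inl i = P $ Inr j $ Inr j" for i j
  proof (cases "i = j")
    case True
    then show ?thesis using commute skew_Inl_Inr by (intro commute_matrix_unit_diagonal) auto
  next
    case False
    have "matrix_unit (Inl i) (Inr j) + matrix_unit (Inl j) (Inr i) \<in> skew_elems symplectic_inv"
      by (simp add: skew_elems_def symplectic_inv_add symplectic_inv_matrix_unit_Inl_Inr
          add.commute)
    with commute False show ?thesis by (intro commute_matrix_unit_add_diagonal) auto
  qed
  moreover have "P $ a $ a = P $ b $ b" for a b
    by (cases a; cases b) (metis Inl_Inr)+
  ultimately show ?thesis using eq_mat_if_scalar_entries by blast
qed

theorem mainTheorem13:
  fixes u :: "'a::field ^ 'n::finite ^ 'n"
    and v :: "'a ^ ('k::finite + 'k) ^ ('k + 'k)"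
  shows "(invertible u \<and>
            (\<lambda>a. matrix_inv u ** a ** u) ` sym_elems transpose \<subseteq> sym_elems transpose
          \<longrightarrow> (\<lambda>a. matrix_inv u ** a ** u) ` skew_elems transpose \<subseteq> skew_elems transpose)
       \<and> (invertible v \<and>
            (\<lambda>a. matrix_inv v ** a ** v) ` skew_elems symplectic_inv \<subseteq> skew_elems symplectic_inv
          \<longrightarrow> (\<lambda>a. matrix_inv v ** a ** v) ` sym_elems symplectic_inv \<subseteq> sym_elems symplectic_inv)"
proof (intro conjI impI; elim conjE)
  assume "invertible u"
    and "(\<lambda>a. matrix_inv u ** a ** u) ` sym_elems transpose \<subseteq> sym_elems transpose"
  then obtain c where "u ** transpose u = mat c"
    using commute_sym_elems_transpose_imp_scalar transpose.conj_image_sym_elems_subset_iff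
    by blast
  then show "(\<lambda>a. matrix_inv u ** a ** u) ` skew_elems transpose \<subseteq> skew_elems transpose"
    using transpose.conj_image_skew_elems_subset_iff[OF \<open>invertible u\<close>] mat_commute by metis
next
  assume "invertible v"
    and "(\<lambda>a. matrix_inv v ** a ** v) ` skew_elems symplectic_inv \<subseteq> skew_elems symplectic_inv"
  then obtain c where "v ** symplectic_inv v = mat c"
    using commute_skew_elems_symplectic_inv_imp_scalar
      symplectic_inv.conj_image_skew_elems_subset_iff
    by blast
  then show "(\<lambda>a. matrix_inv v ** a ** v) ` sym_elems symplectic_inv \<subseteq> sym_elems symplectic_inv"
    using symplectic_inv.conj_image_sym_elems_subset_iff[OF \<open>invertible v\<close>] mat_commute by metis
qed

end
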